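(* Let $C$ be a Reedy category, let $\Gamma$ be one of $\int N(C)$, $\int N^{-,+}(C)$, $\int N^{--,+}_+(C)$, $\mathrm{Down}_*(C)$, $\mathrm{Down}(C)$, and let $\mathrm{last}\colon\Gamma\to C$ be the last component functor. Let $F,G\colon C\to D$ be functors. Then for every natural transformation $\epsilon\colon F\circ\mathrm{last}\Rightarrow G\circ\mathrm{last}$ there is a unique natural transformation $\tilde\epsilon\colon F\Rightarrow G$ with $\tilde\epsilon\,\mathrm{last}=\epsilon$ (right whiskering).
   Context: A Reedy category $(C,C_-,C_+)$: wide subcategories with unique factorization of every morphism as ($C_-$ then $C_+$), every morphism of $C_\pm$ decidably identity or not, and the relation ($x<'y$ iff non-identity $x\to y$ in $C_+$ or non-identity $y\to x$ in $C_-$) well-founded. $\Delta$: finite ordinals $[n]$ and order-preserving maps. $\int N(C)$: objects $([n],X)$ with $X\colon[n]\to C$ a functor; morphisms $([m],X)\to([n],Y)$ are $(\alpha,\theta)$, $\alpha\colon[m]\to[n]$ in $\Delta$, $\theta\colon X\Rightarrow Y\circ\alpha$; composition $(\beta,\varphi)\circ(\alpha,\theta)=(\beta\alpha,(\varphi\alpha)\circ\theta)$. $\int N^{-,+}(C)$: subcategory of objects with $X$ sending all morphisms into $C_-$ and morphisms with all $\theta_i\in C_+$. $\int N^{--,+}_+(C)$: its subcategory of objects whose $X$ reflects identities and morphisms with $\alpha$ injective. Order on hom-sets: $(\alpha,\theta)\le(\alpha',\theta')$ iff $\alpha\le\alpha'$ pointwise and $\theta'_i=Y(\alpha(i)\le\alpha'(i))\circ\theta_i$;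 $\mathrm{Down}_*(C)$, $\mathrm{Down}(C)$ are the quotients of $\int N^{-,+}(C)$, $\int N^{--,+}_+(C)$ by the equivalence relation generated by $\le$ on hom-sets. $\mathrm{last}([n],X)=X(n)$, $\mathrm{last}(\alpha,\theta)=Y(\alpha(m)\le n)\circ\theta_m$ for $(\alpha,\theta)\colon([m],X)\to([n],Y)$, descending to the quotients. *)

theory Defs
  imports Main
begin

record ('o, 'm) cat =
  cObj  :: "'o set"
  cArr  :: "'m set"
  cdom  :: "'m \<Rightarrow> 'o"
  ccod  :: "'m \<Rightarrow> 'o"
  ccomp :: "'m \<Rightarrow> 'm \<Rightarrow> 'm"   (* ccomp C g f = g o f *)
  cid   :: "'o \<Rightarrow> 'm"

definition is_cat :: "('o, 'm) cat \<Rightarrow> bool" where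
  "is_cat C \<equiv>
     (\<forall>f\<in>cArr C. cdom C f \<in> cObj C \<and> ccod C f \<in> cObj C) \<and>
     (\<forall>x\<in>cObj C. cid C x \<in> cArr C \<and> cdom C (cid C x) = x \<and> ccod C (cid C x) = x) \<and>
     (\<forall>f\<in>cArr C. \<forall>g\<in>cArr C. ccod C f = cdom C g \<longrightarrow>
        ccomp C g f \<in> cArr C \<and> cdom C (ccomp C g f) = cdom C f \<and> ccod C (ccomp C g f) = ccod C g) \<and>
     (\<forall>f\<in>cArr C. ccomp C (cid C (ccod C f)) f = f \<and> ccomp C f (cid C (cdom C f)) = f) \<and>
     (\<forall>f\<in>cArr C. \<forall>g\<in>cArr C. \<forall>h\<in>cArr C. ccod C f = cdom C g \<and> ccod C g = cdom C h \<longrightarrow>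
        ccomp C h (ccomp C g f) = ccomp C (ccomp C h g) f)"

definition is_functor :: "('o, 'm) cat \<Rightarrow> ('p, 'n) cat \<Rightarrow> ('o \<Rightarrow> 'p) \<times> ('m \<Rightarrow> 'n) \<Rightarrow> bool" where
  "is_functor C D F \<equiv>
     (\<forall>x\<in>cObj C. fst F x \<in> cObj D) \<and>
     (\<forall>f\<in>cArr C. snd F f \<in> cArr D \<and> cdom D (snd F f) = fst F (cdom C f) \<and>
                 ccod D (snd F f) = fst F (ccod C f)) \<and>
     (\<forall>x\<in>cObj C. snd F (cid C x) = cid D (fst F x)) \<and>
     (\<forall>f\<in>cArr C. \<forall>g\<in>cArr C. ccod C f = cdom C g \<longrightarrow>
        snd F (ccomp C g f) = ccomp D (snd F g) (snd F f))"

definition fcomp :: "('o \<Rightarrow> 'p) \<times> ('m \<Rightarrow> 'n) \<Rightarrow> ('g \<Rightarrow> 'o) \<times> ('a \<Rightarrow> 'm) \<Rightarrow> ('g \<Rightarrow> 'p) \<times> ('a \<Rightarrow> 'n)" where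
  "fcomp F L = (fst F \<circ> fst L, snd F \<circ> snd L)"

definition nat_trans :: "('o, 'm) cat \<Rightarrow> ('p, 'n) cat \<Rightarrow> ('o \<Rightarrow> 'p) \<times> ('m \<Rightarrow> 'n)
    \<Rightarrow> ('o \<Rightarrow> 'p) \<times> ('m \<Rightarrow> 'n) \<Rightarrow> ('o \<Rightarrow> 'n) \<Rightarrow> bool" where
  "nat_trans C D F G \<eta> \<equiv>
     (\<forall>x\<in>cObj C. \<eta> x \<in> cArr D \<and> cdom D (\<eta> x) = fst F x \<and> ccod D (\<eta> x) = fst G x) \<and>
     (\<forall>f\<in>cArr C. ccomp D (\<eta> (ccod C f)) (snd F f) = ccomp D (snd G f) (\<eta> (cdom C f)))"

definition wide_subcat :: "('o, 'm) cat \<Rightarrow> 'm set \<Rightarrow> bool" where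
  "wide_subcat C S \<equiv> S \<subseteq> cArr C \<and> (\<forall>x\<in>cObj C. cid C x \<in> S) \<and>
     (\<forall>f\<in>S. \<forall>g\<in>S. ccod C f = cdom C g \<longrightarrow> ccomp C g f \<in> S)"

definition reedy_less :: "('o, 'm) cat \<Rightarrow> 'm set \<Rightarrow> 'm set \<Rightarrow> ('o \<times> 'o) set" where
  "reedy_less C Cm Cp = {(x, y). x \<in> cObj C \<and> y \<in> cObj C \<and>
     ((\<exists>f\<in>Cp. cdom C f = x \<and> ccod C f = y \<and> f \<noteq> cid C x) \<or>
      (\<exists>f\<in>Cm. cdom C f = y \<and> ccod C f = x \<and> f \<noteq> cid C y))}"

definition reedy :: "('o, 'm) cat \<Rightarrow> 'm set \<Rightarrow> 'm set \<Rightarrow> bool" where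
  "reedy C Cm Cp \<equiv> is_cat C \<and> wide_subcat C Cm \<and> wide_subcat C Cp \<and>
     (\<forall>f\<in>cArr C. \<exists>!gh. fst gh \<in> Cm \<and> snd gh \<in> Cp \<and> cdom C (fst gh) = cdom C f \<and>
        ccod C (fst gh) = cdom C (snd gh) \<and> ccod C (snd gh) = ccod C f \<and>
        ccomp C (snd gh) (fst gh) = f) \<and>
     wf (reedy_less C Cm Cp)"

text \<open>An object ([n], X): X i j (for i \<le> j \<le> n) is the image of i \<le> j; undefined elsewhere.
  The object X(i) is the domain of X i i.\<close>
type_synonym 'm nobj = "nat \<times> (nat \<Rightarrow> nat \<Rightarrow> 'm)"
type_synonym 'm narr = "'m nobj \<times> 'm nobj \<times> (nat \<Rightarrow> nat) \<times> (nat \<Rightarrow> 'm)"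

definition nobj_at :: "('o, 'm) cat \<Rightarrow> 'm nobj \<Rightarrow> nat \<Rightarrow> 'o" where
  "nobj_at C A i = cdom C (snd A i i)"

definition nerve_obj :: "('o, 'm) cat \<Rightarrow> 'm nobj \<Rightarrow> bool" where
  "nerve_obj C A \<equiv> (case A of (n, X) \<Rightarrow>
     (\<forall>i j. \<not> (i \<le> j \<and> j \<le> n) \<longrightarrow> X i j = undefined) \<and>
     (\<forall>i j. i \<le> j \<and> j \<le> n \<longrightarrow> X i j \<in> cArr C \<and>
         cdom C (X i j) = cdom C (X i i) \<and> ccod C (X i j) = cdom C (X j j)) \<and>
     (\<forall>i\<le>n. X i i = cid C (cdom C (X i i))) \<and>
     (\<forall>i j k. i \<le> j \<and> j \<le> k \<and> k \<le> n \<longrightarrow> ccomp C (X j k) (X i j) = X i k))"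

definition nerve_arr :: "('o, 'm) cat \<Rightarrow> 'm narr \<Rightarrow> bool" where
  "nerve_arr C f \<equiv> (case f of (A, B, \<alpha>, \<theta>) \<Rightarrow>
     nerve_obj C A \<and> nerve_obj C B \<and>
     (\<forall>i. fst A < i \<longrightarrow> \<alpha> i = undefined \<and> \<theta> i = undefined) \<and>
     (\<forall>i\<le>fst A. \<alpha> i \<le> fst B) \<and>
     (\<forall>i j. i \<le> j \<and> j \<le> fst A \<longrightarrow> \<alpha> i \<le> \<alpha> j) \<and>
     (\<forall>i\<le>fst A. \<theta> i \<in> cArr C \<and> cdom C (\<theta> i) = nobj_at C A i \<and>
                 ccod C (\<theta> i) = nobj_at C B (\<alpha> i)) \<and>
     (\<forall>i j. i \<le> j \<and> j \<le> fst A \<longrightarrow>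
        ccomp C (\<theta> j) (snd A i j) = ccomp C (snd B (\<alpha> i) (\<alpha> j)) (\<theta> i)))"

definition intN :: "('o, 'm) cat \<Rightarrow> ('m nobj, 'm narr) cat" where
  "intN C = \<lparr> cObj = {A. nerve_obj C A},
     cArr = {f. nerve_arr C f},
     cdom = (\<lambda>f. fst f),
     ccod = (\<lambda>f. fst (snd f)),
     ccomp = (\<lambda>g f. (fst f, fst (snd g),
        (\<lambda>i. if i \<le> fst (fst f) then fst (snd (snd g)) (fst (snd (snd f)) i) else undefined),
        (\<lambda>i. if i \<le> fst (fst f)
             then ccomp C (snd (snd (snd g)) (fst (snd (snd f)) i)) (snd (snd (snd f)) i)
             else undefined))),
     cid = (\<lambda>A. (A, A, (\<lambda>i. if i \<le> fst A then i else undefined),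
        (\<lambda>i. if i \<le> fst A then cid C (nobj_at C A i) else undefined))) \<rparr>"

definition subcat :: "('o, 'm) cat \<Rightarrow> ('o \<Rightarrow> bool) \<Rightarrow> ('m \<Rightarrow> bool) \<Rightarrow> ('o, 'm) cat" where
  "subcat C P Q = C \<lparr> cObj := {x \<in> cObj C. P x},
     cArr := {f \<in> cArr C. P (cdom C f) \<and> P (ccod C f) \<and> Q f} \<rparr>"

definition intN_mp :: "('o, 'm) cat \<Rightarrow> 'm set \<Rightarrow> 'm set \<Rightarrow> ('m nobj, 'm narr) cat" where
  "intN_mp C Cm Cp = subcat (intN C)
     (\<lambda>A. \<forall>i j. i \<le> j \<and> j \<le> fst A \<longrightarrow> snd A i j \<in> Cm)
     (\<lambda>f. \<forall>i\<le>fst (fst f). snd (snd (snd f)) i \<in> Cp)"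

definition intN_mmpp :: "('o, 'm) cat \<Rightarrow> 'm set \<Rightarrow> 'm set \<Rightarrow> ('m nobj, 'm narr) cat" where
  "intN_mmpp C Cm Cp = subcat (intN_mp C Cm Cp)
     (\<lambda>A. \<forall>i j. i \<le> j \<and> j \<le> fst A \<and> snd A i j = cid C (nobj_at C A i) \<longrightarrow> i = j)
     (\<lambda>f. inj_on (fst (snd (snd f))) {0..fst (fst f)})"

definition nerve_le :: "('o, 'm) cat \<Rightarrow> 'm narr \<Rightarrow> 'm narr \<Rightarrow> bool" where
  "nerve_le C f f' \<equiv> (case f of (A, B, \<alpha>, \<theta>) \<Rightarrow> case f' of (A', B', \<alpha>', \<theta>') \<Rightarrow>
     A = A' \<and> B = B' \<and>
     (\<forall>i\<le>fst A. \<alpha> i \<le> \<alpha>' i \<and> \<theta>' i = ccomp C (snd B (\<alpha> i) (\<alpha>' i)) (\<theta> i)))"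

text \<open>Equivalence relation on the arrows of G generated by the order (which only relates
  parallel arrows, so it lives on hom-sets).\<close>
definition le_equiv :: "('o, 'm) cat \<Rightarrow> ('m nobj, 'm narr) cat \<Rightarrow> ('m narr \<times> 'm narr) set" where
  "le_equiv C G = ({(f, g). f \<in> cArr G \<and> g \<in> cArr G \<and> (nerve_le C f g \<or> nerve_le C g f)})\<^sup>*"

definition quot_cat :: "('x, 'a) cat \<Rightarrow> ('a \<times> 'a) set \<Rightarrow> ('x, 'a set) cat" where
  "quot_cat G R = \<lparr> cObj = cObj G,
     cArr = {R `` {f} | f. f \<in> cArr G},
     cdom = (\<lambda>F. cdom G (SOME f. f \<in> F)),
     ccod = (\<lambda>F. ccod G (SOME f. f \<in> F)),
     ccomp = (\<lambda>H F. R `` {ccomp G (SOME h. h \<in> H) (SOME f. f \<in> F)}),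
     cid = (\<lambda>x. R `` {cid G x}) \<rparr>"

definition Down_star :: "('o, 'm) cat \<Rightarrow> 'm set \<Rightarrow> 'm set \<Rightarrow> ('m nobj, 'm narr set) cat" where
  "Down_star C Cm Cp = quot_cat (intN_mp C Cm Cp) (le_equiv C (intN_mp C Cm Cp))"

definition Down :: "('o, 'm) cat \<Rightarrow> 'm set \<Rightarrow> 'm set \<Rightarrow> ('m nobj, 'm narr set) cat" where
  "Down C Cm Cp = quot_cat (intN_mmpp C Cm Cp) (le_equiv C (intN_mmpp C Cm Cp))"

definition last_obj :: "('o, 'm) cat \<Rightarrow> 'm nobj \<Rightarrow> 'o" where
  "last_obj C A = nobj_at C A (fst A)"

definition last_arr :: "('o, 'm) cat \<Rightarrow> 'm narr \<Rightarrow> 'm" where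
  "last_arr C f = (case f of (A, B, \<alpha>, \<theta>) \<Rightarrow>
     ccomp C (snd B (\<alpha> (fst A)) (fst B)) (\<theta> (fst A)))"

definition last_fun :: "('o, 'm) cat \<Rightarrow> ('m nobj \<Rightarrow> 'o) \<times> ('m narr \<Rightarrow> 'm)" where
  "last_fun C = (last_obj C, last_arr C)"

definition last_fun_q :: "('o, 'm) cat \<Rightarrow> ('m nobj \<Rightarrow> 'o) \<times> ('m narr set \<Rightarrow> 'm)" where
  "last_fun_q C = (last_obj C, \<lambda>F. last_arr C (SOME f. f \<in> F))"

definition whisker_unique ::
  "('o, 'm) cat \<Rightarrow> ('p, 'n) cat \<Rightarrow> ('g, 'a) cat \<Rightarrow> ('g \<Rightarrow> 'o) \<times> ('a \<Rightarrow> 'm)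
     \<Rightarrow> ('o \<Rightarrow> 'p) \<times> ('m \<Rightarrow> 'n) \<Rightarrow> ('o \<Rightarrow> 'p) \<times> ('m \<Rightarrow> 'n) \<Rightarrow> bool" where
  "whisker_unique C D \<Gamma> L F G \<equiv>
     \<forall>\<epsilon>. nat_trans \<Gamma> D (fcomp F L) (fcomp G L) \<epsilon> \<longrightarrow>
       (\<exists>!\<epsilon>'. (\<forall>x. x \<notin> cObj C \<longrightarrow> \<epsilon>' x = undefined) \<and> nat_trans C D F G \<epsilon>' \<and>
              (\<forall>x\<in>cObj \<Gamma>. \<epsilon>' (fst L x) = \<epsilon> x))"

end

(*
  Let \<epsilon> : F \<circ> last \<Rightarrow> G \<circ> last. Every object x of \<Gamma> receives the morphism
  ([0], last x) \<rightarrow> x picking its last vertex, which lies over an identity; naturality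
  then gives \<epsilon>_x = \<epsilon>_([0], last x), so \<epsilon>'_c := \<epsilon>_([0], c) is the only candidate.
  It is natural at every p in C+, the image of ([0], dom p) \<rightarrow> ([0], cod p), and at
  every non-identity m in C-, the image of the inclusion of the vertex 0 into the
  1-simplex m. Since every arrow factors as an arrow of C- followed by one of C+,
  \<epsilon>' is natural. In Down_*(C) and
  Down(C) last is constant on equivalence classes, so the same lifts exist there.
*)

theory Submission
  imports Defs "HOL-Library.FuncSet"
begin

lemma is_catD:
  assumes "is_cat C"
  shows cat_dom: "f \<in> cArr C \<Longrightarrow> cdom C f \<in> cObj C"
    and cat_cod: "f \<in> cArr C \<Longrightarrow> ccod C f \<in> cObj C"
    and cat_id: "x \<in> cObj C \<Longrightarrow> cid C x \<in> cArr C"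
    and cat_id_dom: "x \<in> cObj C \<Longrightarrow> cdom C (cid C x) = x"
    and cat_id_cod: "x \<in> cObj C \<Longrightarrow> ccod C (cid C x) = x"
    and cat_comp_dom: "f \<in> cArr C \<Longrightarrow> g \<in> cArr C \<Longrightarrow> ccod C f = cdom C g \<Longrightarrow>
        cdom C (ccomp C g f) = cdom C f"
    and cat_comp_cod: "f \<in> cArr C \<Longrightarrow> g \<in> cArr C \<Longrightarrow> ccod C f = cdom C g \<Longrightarrow>
        ccod C (ccomp C g f) = ccod C g"
    and cat_id_left: "f \<in> cArr C \<Longrightarrow> ccomp C (cid C (ccod C f)) f = f"
    and cat_id_right: "f \<in> cArr C \<Longrightarrow> ccomp C f (cid C (cdom C f)) = f"
    and cat_assoc: "f \<in> cArr C \<Longrightarrow> g \<in> cArr C \<Longrightarrow> h \<in> cArr C \<Longrightarrow>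
        ccod C f = cdom C g \<Longrightarrow> ccod C g = cdom C h \<Longrightarrow>
        ccomp C h (ccomp C g f) = ccomp C (ccomp C h g) f"
  using assms unfolding is_cat_def by blast+

lemma is_functorD:
  assumes "is_functor C D F"
  shows functor_arr: "f \<in> cArr C \<Longrightarrow> snd F f \<in> cArr D"
    and functor_dom: "f \<in> cArr C \<Longrightarrow> cdom D (snd F f) = fst F (cdom C f)"
    and functor_cod: "f \<in> cArr C \<Longrightarrow> ccod D (snd F f) = fst F (ccod C f)"
    and functor_id: "x \<in> cObj C \<Longrightarrow> snd F (cid C x) = cid D (fst F x)"
    and functor_comp: "f \<in> cArr C \<Longrightarrow> g \<in> cArr C \<Longrightarrow> ccod C f = cdom C g \<Longrightarrow>
        snd F (ccomp C g f) = ccomp D (snd F g) (snd F f)"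
  using assms unfolding is_functor_def by blast+

definition natural_at ::
  "('o, 'm) cat \<Rightarrow> ('p, 'n) cat \<Rightarrow> ('o \<Rightarrow> 'p) \<times> ('m \<Rightarrow> 'n) \<Rightarrow> ('o \<Rightarrow> 'p) \<times> ('m \<Rightarrow> 'n)
     \<Rightarrow> ('o \<Rightarrow> 'n) \<Rightarrow> 'm \<Rightarrow> bool" where
  "natural_at C D F G \<eta> f \<longleftrightarrow>
     ccomp D (\<eta> (ccod C f)) (snd F f) = ccomp D (snd G f) (\<eta> (cdom C f))"

definition components ::
  "('o, 'm) cat \<Rightarrow> ('p, 'n) cat \<Rightarrow> ('o \<Rightarrow> 'p) \<times> ('m \<Rightarrow> 'n) \<Rightarrow> ('o \<Rightarrow> 'p) \<times> ('m \<Rightarrow> 'n)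
     \<Rightarrow> ('o \<Rightarrow> 'n) \<Rightarrow> bool" where
  "components C D F G \<eta> \<longleftrightarrow>
     (\<forall>x\<in>cObj C. \<eta> x \<in> cArr D \<and> cdom D (\<eta> x) = fst F x \<and> ccod D (\<eta> x) = fst G x)"

lemma nat_trans_iff: 
  "nat_trans C D F G \<eta> \<longleftrightarrow> components C D F G \<eta> \<and> (\<forall>f\<in>cArr C. natural_at C D F G \<eta> f)"
  unfolding nat_trans_def components_def natural_at_def ..

lemma natural_at_id:
  assumes C: "is_cat C" and D: "is_cat D" and F: "is_functor C D F" and G: "is_functor C D G"
    and \<eta>: "components C D F G \<eta>" and x: "x \<in> cObj C"
  shows "natural_at C D F G \<eta> (cid C x)"
proof -
  have "\<eta> x \<in> cArr D" "cdom D (\<eta> x) = fst F x" "ccod D (\<eta> x) = fst G x"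
    using \<eta> x unfolding components_def by auto
  then show ?thesis
    using cat_id_left[OF D, of "\<eta> x"] cat_id_right[OF D, of "\<eta> x"] C x
    by (simp add: natural_at_def cat_id_dom cat_id_cod functor_id[OF F] functor_id[OF G])
qed

lemma natural_at_comp:
  assumes C: "is_cat C" and D: "is_cat D" and F: "is_functor C D F" and G: "is_functor C D G"
    and \<eta>: "components C D F G \<eta>"
    and f: "f \<in> cArr C" and g: "g \<in> cArr C" and fg: "ccod C f = cdom C g"
    and nat_f: "natural_at C D F G \<eta> f" and nat_g: "natural_at C D F G \<eta> g"
  shows "natural_at C D F G \<eta> (ccomp C g f)"
proof -
  let ?x = "cdom C f" and ?y = "ccod C f" and ?z = "ccod C g"
  have objs: "?x \<in> cObj C" "?y \<in> cObj C" "?z \<in> cObj C"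
    using cat_dom[OF C f] cat_cod[OF C f] cat_cod[OF C g] .
  note \<eta>x = \<eta>[unfolded components_def, rule_format, OF objs(1)]
   and \<eta>y = \<eta>[unfolded components_def, rule_format, OF objs(2)]
   and \<eta>z = \<eta>[unfolded components_def, rule_format, OF objs(3)]
  note Ff = functor_arr[OF F f] functor_dom[OF F f] functor_cod[OF F f]
   and Fg = functor_arr[OF F g] functor_dom[OF F g] functor_cod[OF F g]
   and Gf = functor_arr[OF G f] functor_dom[OF G f] functor_cod[OF G f]
   and Gg = functor_arr[OF G g] functor_dom[OF G g] functor_cod[OF G g]
  have "ccomp D (\<eta> ?z) (snd F (ccomp C g f)) = ccomp D (ccomp D (\<eta> ?z) (snd F g)) (snd F f)"
    using cat_assoc[OF D Ff(1) Fg(1) \<eta>z[THEN conjunct1]] Ff Fg \<eta>z fg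
    by (simp add: functor_comp[OF F f g fg])
  also have "\<dots> = ccomp D (snd G g) (ccomp D (\<eta> ?y) (snd F f))"
    using nat_g cat_assoc[OF D Ff(1) \<eta>y[THEN conjunct1] Gg(1)] Ff Gg \<eta>y fg
    by (simp add: natural_at_def)
  also have "\<dots> = ccomp D (snd G (ccomp C g f)) (\<eta> ?x)"
    using nat_f cat_assoc[OF D \<eta>x[THEN conjunct1] Gf(1) Gg(1)] Gf Gg \<eta>x fg
    by (simp add: natural_at_def functor_comp[OF G f g fg])
  finally show ?thesis
    by (simp add: natural_at_def cat_comp_dom[OF C f g fg] cat_comp_cod[OF C f g fg])
qed

lemma nat_trans_if_natural_on_factors:
  assumes C: "is_cat C" and D: "is_cat D" and F: "is_functor C D F" and G: "is_functor C D G"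
    and \<eta>: "components C D F G \<eta>"
    and Cm: "Cm \<subseteq> cArr C" and Cp: "Cp \<subseteq> cArr C"
    and factor: "\<forall>f\<in>cArr C. \<exists>m\<in>Cm. \<exists>p\<in>Cp. ccod C m = cdom C p \<and> ccomp C p m = f"
    and natural: "\<And>f. f \<in> Cm \<union> Cp \<Longrightarrow> natural_at C D F G \<eta> f"
  shows "nat_trans C D F G \<eta>"
  unfolding nat_trans_iff
proof (intro conjI \<eta> ballI)
  fix f assume "f \<in> cArr C"
  with factor obtain m p where mp: "m \<in> Cm" "p \<in> Cp" "ccod C m = cdom C p"
    and f: "ccomp C p m = f"
    by blast
  show "natural_at C D F G \<eta> f"
    unfolding f[symmetric]
    using natural_at_comp[OF C D F G \<eta> _ _ mp(3)] natural mp Cm Cp by blast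
qed

text \<open>The lifts of identities make every \<epsilon> : F \<circ> L \<Rightarrow> G \<circ> L constant on the fibres of L,
  so an arrow of C- may lift to an arrow ending at any object over its codomain. Identities
  of C- need no lift: the 1-simplex of an identity does not reflect identities.\<close>

locale reedy_lifts =
  fixes C :: "('o, 'm) cat" and Cm Cp :: "'m set"
    and \<Gamma> :: "('g, 'a) cat" and L :: "('g \<Rightarrow> 'o) \<times> ('a \<Rightarrow> 'm)" and s :: "'o \<Rightarrow> 'g"
  assumes section_obj: "c \<in> cObj C \<Longrightarrow> s c \<in> cObj \<Gamma>"
    and section_last: "c \<in> cObj C \<Longrightarrow> fst L (s c) = c"
    and last_obj_closed: "x \<in> cObj \<Gamma> \<Longrightarrow> fst L x \<in> cObj C"
    and lift_id: "x \<in> cObj \<Gamma> \<Longrightarrow>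
      \<exists>a\<in>cArr \<Gamma>. cdom \<Gamma> a = s (fst L x) \<and> ccod \<Gamma> a = x \<and> snd L a = cid C (fst L x)"
    and lift_plus: "p \<in> Cp \<Longrightarrow>
      \<exists>a\<in>cArr \<Gamma>. cdom \<Gamma> a = s (cdom C p) \<and> ccod \<Gamma> a = s (ccod C p) \<and> snd L a = p"
    and lift_minus: "m \<in> Cm \<Longrightarrow> m \<noteq> cid C (cdom C m) \<Longrightarrow>
      \<exists>a\<in>cArr \<Gamma>. cdom \<Gamma> a = s (cdom C m) \<and> ccod \<Gamma> a \<in> cObj \<Gamma> \<and> fst L (ccod \<Gamma> a) = ccod C m
        \<and> snd L a = m"
begin

definition descended :: "('g \<Rightarrow> 'n) \<Rightarrow> 'o \<Rightarrow> 'n" where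
  "descended \<epsilon> = (\<lambda>c\<in>cObj C. \<epsilon> (s c))"

context
  fixes D :: "('p, 'n) cat" and F G :: "('o \<Rightarrow> 'p) \<times> ('m \<Rightarrow> 'n)" and \<epsilon> :: "'g \<Rightarrow> 'n"
  assumes C: "is_cat C" and D: "is_cat D" and F: "is_functor C D F" and G: "is_functor C D G"
    and \<epsilon>: "nat_trans \<Gamma> D (fcomp F L) (fcomp G L) \<epsilon>"
begin

lemma whiskered_component:
  "x \<in> cObj \<Gamma> \<Longrightarrow> \<epsilon> x \<in> cArr D \<and> cdom D (\<epsilon> x) = fst F (fst L x) \<and> ccod D (\<epsilon> x) = fst G (fst L x)"
  using \<epsilon> unfolding nat_trans_def fcomp_def by auto

lemma whiskered_natural:
  "a \<in> cArr \<Gamma> \<Longrightarrow>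
    ccomp D (\<epsilon> (ccod \<Gamma> a)) (snd F (snd L a)) = ccomp D (snd G (snd L a)) (\<epsilon> (cdom \<Gamma> a))"
  using \<epsilon> unfolding nat_trans_def fcomp_def by auto

lemma whiskered_eq_section:
  assumes x: "x \<in> cObj \<Gamma>"
  shows "\<epsilon> x = \<epsilon> (s (fst L x))"
proof -
  let ?c = "fst L x"
  obtain a where a: "a \<in> cArr \<Gamma>" "cdom \<Gamma> a = s ?c" "ccod \<Gamma> a = x" "snd L a = cid C ?c"
    using lift_id[OF x] by blast
  have c: "?c \<in> cObj C" using last_obj_closed[OF x] .
  note \<epsilon>x = whiskered_component[OF x] and \<epsilon>s = whiskered_component[OF section_obj[OF c]]
  have "\<epsilon> x = ccomp D (\<epsilon> x) (cid D (fst F ?c))"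
    using cat_id_right[OF D, of "\<epsilon> x"] \<epsilon>x by simp
  also have "\<dots> = ccomp D (cid D (fst G ?c)) (\<epsilon> (s ?c))"
    using whiskered_natural[OF a(1)] a functor_id[OF F c] functor_id[OF G c] by simp
  also have "\<dots> = \<epsilon> (s ?c)"
    using cat_id_left[OF D, of "\<epsilon> (s ?c)"] \<epsilon>s section_last[OF c] by simp
  finally show ?thesis .
qed

lemma descended_components: "components C D F G (descended \<epsilon>)"
  using whiskered_component[OF section_obj] section_last
  unfolding components_def descended_def by simp

lemma descended_natural_plus:
  assumes p: "p \<in> Cp" and Cp: "Cp \<subseteq> cArr C"
  shows "natural_at C D F G (descended \<epsilon>) p"
proof -
  obtain a where a: "a \<in> cArr \<Gamma>" "cdom \<Gamma> a = s (cdom C p)" "ccod \<Gamma> a = s (ccod C p)"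
    "snd L a = p"
    using lift_plus[OF p] by blast
  then show ?thesis
    using whiskered_natural[OF a(1)] cat_dom[OF C] cat_cod[OF C] p Cp
    unfolding natural_at_def descended_def by auto
qed

lemma descended_natural_minus:
  assumes m: "m \<in> Cm" and Cm: "Cm \<subseteq> cArr C"
  shows "natural_at C D F G (descended \<epsilon>) m"
proof (cases "m = cid C (cdom C m)")
  case True
  then show ?thesis
    using natural_at_id[OF C D F G descended_components] cat_dom[OF C] m Cm by force
next
  case False
  then obtain a where a: "a \<in> cArr \<Gamma>" "cdom \<Gamma> a = s (cdom C m)" "ccod \<Gamma> a \<in> cObj \<Gamma>"
    "fst L (ccod \<Gamma> a) = ccod C m" "snd L a = m"
    using lift_minus[OF m] by blast
  then show ?thesis
    using whiskered_natural[OF a(1)] whiskered_eq_section[OF a(3)] cat_dom[OF C] cat_cod[OF C] m Cm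
    unfolding natural_at_def descended_def by auto
qed

end

theorem whisker_unique:
  assumes C: "is_cat C" and D: "is_cat D" and F: "is_functor C D F" and G: "is_functor C D G"
    and Cm: "Cm \<subseteq> cArr C" and Cp: "Cp \<subseteq> cArr C"
    and factor: "\<forall>f\<in>cArr C. \<exists>m\<in>Cm. \<exists>p\<in>Cp. ccod C m = cdom C p \<and> ccomp C p m = f"
  shows "whisker_unique C D \<Gamma> L F G"
  unfolding whisker_unique_def
proof (intro allI impI)
  fix \<epsilon> assume \<epsilon>: "nat_trans \<Gamma> D (fcomp F L) (fcomp G L) \<epsilon>"
  have "\<forall>x. x \<notin> cObj C \<longrightarrow> descended \<epsilon> x = undefined"
    by (simp add: descended_def)
  moreover have "nat_trans C D F G (descended \<epsilon>)"
    using nat_trans_if_natural_on_factors[OF C D F G descended_components[OF C D F G \<epsilon>] Cm Cp factor]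
      descended_natural_plus[OF C D F G \<epsilon> _ Cp] descended_natural_minus[OF C D F G \<epsilon> _ Cm]
    by blast
  moreover have "\<forall>x\<in>cObj \<Gamma>. descended \<epsilon> (fst L x) = \<epsilon> x"
    using whiskered_eq_section[OF C D F G \<epsilon>] last_obj_closed by (simp add: descended_def)
  moreover have "\<eta> = descended \<epsilon>"
    if "\<forall>x. x \<notin> cObj C \<longrightarrow> \<eta> x = undefined" "\<forall>x\<in>cObj \<Gamma>. \<eta> (fst L x) = \<epsilon> x" for \<eta>
    using that section_obj section_last unfolding descended_def by fastforce
  ultimately show "\<exists>!\<epsilon>'. (\<forall>x. x \<notin> cObj C \<longrightarrow> \<epsilon>' x = undefined) \<and> nat_trans C D F G \<epsilon>' \<and>
      (\<forall>x\<in>cObj \<Gamma>. \<epsilon>' (fst L x) = \<epsilon> x)"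
    by (intro ex1I[of _ "descended \<epsilon>"]) blast+
qed

end

lemma (in reedy_lifts) reedy_lifts_image:
  assumes obj: "cObj \<Gamma>' = cObj \<Gamma>" and last_obj: "fst L' = fst L"
    and q: "\<And>a. a \<in> cArr \<Gamma> \<Longrightarrow> q a \<in> cArr \<Gamma>' \<and> cdom \<Gamma>' (q a) = cdom \<Gamma> a \<and>
      ccod \<Gamma>' (q a) = ccod \<Gamma> a \<and> snd L' (q a) = snd L a"
  shows "reedy_lifts C Cm Cp \<Gamma>' L' s"
proof
  fix x assume "x \<in> cObj \<Gamma>'"
  then obtain a where "a \<in> cArr \<Gamma>" "cdom \<Gamma> a = s (fst L x)" "ccod \<Gamma> a = x" "snd L a = cid C (fst L x)"
    using lift_id obj by blast
  then show "\<exists>a\<in>cArr \<Gamma>'. cdom \<Gamma>' a = s (fst L' x) \<and> ccod \<Gamma>' a = x \<and> snd L' a = cid C (fst L' x)"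
    using q last_obj by metis
next
  fix p assume "p \<in> Cp"
  then obtain a where "a \<in> cArr \<Gamma>" "cdom \<Gamma> a = s (cdom C p)" "ccod \<Gamma> a = s (ccod C p)" "snd L a = p"
    using lift_plus by blast
  then show "\<exists>a\<in>cArr \<Gamma>'. cdom \<Gamma>' a = s (cdom C p) \<and> ccod \<Gamma>' a = s (ccod C p) \<and> snd L' a = p"
    using q by metis
next
  fix m assume "m \<in> Cm" "m \<noteq> cid C (cdom C m)"
  then obtain a where "a \<in> cArr \<Gamma>" "cdom \<Gamma> a = s (cdom C m)" "ccod \<Gamma> a \<in> cObj \<Gamma>"
    "fst L (ccod \<Gamma> a) = ccod C m" "snd L a = m"
    using lift_minus by blast
  then show "\<exists>a\<in>cArr \<Gamma>'. cdom \<Gamma>' a = s (cdom C m) \<and> ccod \<Gamma>' a \<in> cObj \<Gamma>' \<and>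
      fst L' (ccod \<Gamma>' a) = ccod C m \<and> snd L' a = m"
    using q obj last_obj by metis
qed (use section_obj section_last last_obj_closed obj last_obj in auto)

lemma nerve_objD:
  assumes "nerve_obj C A"
  shows nerve_obj_arr: "i \<le> j \<Longrightarrow> j \<le> fst A \<Longrightarrow> snd A i j \<in> cArr C"
    and nerve_obj_dom: "i \<le> j \<Longrightarrow> j \<le> fst A \<Longrightarrow> cdom C (snd A i j) = nobj_at C A i"
    and nerve_obj_cod: "i \<le> j \<Longrightarrow> j \<le> fst A \<Longrightarrow> ccod C (snd A i j) = nobj_at C A j"
    and nerve_obj_id: "i \<le> fst A \<Longrightarrow> snd A i i = cid C (nobj_at C A i)"
    and nerve_obj_comp: "i \<le> j \<Longrightarrow> j \<le> k \<Longrightarrow> k \<le> fst A \<Longrightarrow>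
        ccomp C (snd A j k) (snd A i j) = snd A i k"
proof -
  obtain n X where A: "A = (n, X)" by fastforce
  have arr: "\<forall>i j. i \<le> j \<and> j \<le> n \<longrightarrow> X i j \<in> cArr C \<and> cdom C (X i j) = cdom C (X i i) \<and>
      ccod C (X i j) = cdom C (X j j)"
    and id: "\<forall>i\<le>n. X i i = cid C (cdom C (X i i))"
    and comp: "\<forall>i j k. i \<le> j \<and> j \<le> k \<and> k \<le> n \<longrightarrow> ccomp C (X j k) (X i j) = X i k"
    using assms unfolding A nerve_obj_def prod.case by argo+
  show "i \<le> j \<Longrightarrow> j \<le> fst A \<Longrightarrow> snd A i j \<in> cArr C"
    and "i \<le> j \<Longrightarrow> j \<le> fst A \<Longrightarrow> cdom C (snd A i j) = nobj_at C A i"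
    and "i \<le> j \<Longrightarrow> j \<le> fst A \<Longrightarrow> ccod C (snd A i j) = nobj_at C A j"
    using arr[rule_format, of i j] unfolding A nobj_at_def by simp_all
  show "i \<le> fst A \<Longrightarrow> snd A i i = cid C (nobj_at C A i)"
    using id[rule_format, of i] unfolding A nobj_at_def by simp
  show "i \<le> j \<Longrightarrow> j \<le> k \<Longrightarrow> k \<le> fst A \<Longrightarrow> ccomp C (snd A j k) (snd A i j) = snd A i k"
    using comp[rule_format, of i j k] unfolding A by simp
qed

lemma nobj_at_in_cObj:
  "is_cat C \<Longrightarrow> nerve_obj C A \<Longrightarrow> i \<le> fst A \<Longrightarrow> nobj_at C A i \<in> cObj C"
  by (metis cat_dom le_refl nerve_obj_arr nerve_obj_dom)

definition vertex :: "('o, 'm) cat \<Rightarrow> 'o \<Rightarrow> 'm nobj" where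
  "vertex C c = (0, \<lambda>i j. if i = 0 \<and> j = 0 then cid C c else undefined)"

definition edge :: "('o, 'm) cat \<Rightarrow> 'm \<Rightarrow> 'm nobj" where
  "edge C m = (1, \<lambda>i j. if i = 0 \<and> j = 0 then cid C (cdom C m) else if i = 0 \<and> j = 1 then m
     else if i = 1 \<and> j = 1 then cid C (ccod C m) else undefined)"

definition arr_from_vertex :: "('o, 'm) cat \<Rightarrow> 'o \<Rightarrow> 'm nobj \<Rightarrow> nat \<Rightarrow> 'm \<Rightarrow> 'm narr" where
  "arr_from_vertex C c B k t =
     (vertex C c, B, \<lambda>i. if i = 0 then k else undefined, \<lambda>i. if i = 0 then t else undefined)"

lemma fst_vertex [simp]: "fst (vertex C c) = 0"
  by (simp add: vertex_def)

lemma fst_edge [simp]: "fst (edge C m) = 1"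
  by (simp add: edge_def)

lemma nerve_obj_vertex:
  assumes C: "is_cat C" and c: "c \<in> cObj C"
  shows "nerve_obj C (vertex C c)"
  using cat_id[OF C c] cat_id_dom[OF C c] cat_id_cod[OF C c] cat_id_left[OF C, of "cid C c"]
  unfolding nerve_obj_def vertex_def by auto

lemma nobj_at_vertex [simp]: "is_cat C \<Longrightarrow> c \<in> cObj C \<Longrightarrow> nobj_at C (vertex C c) 0 = c"
  by (simp add: nobj_at_def vertex_def cat_id_dom)

lemma nerve_obj_edge:
  assumes C: "is_cat C" and m: "m \<in> cArr C"
  shows "nerve_obj C (edge C m)"
proof -
  have d: "cdom C m \<in> cObj C" and c: "ccod C m \<in> cObj C" using cat_dom[OF C m] cat_cod[OF C m] .
  have le_1: "i \<le> (1::nat) \<longleftrightarrow> i = 0 \<or> i = 1" for i by auto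
  show ?thesis
    unfolding nerve_obj_def edge_def prod.case le_1
    using cat_id[OF C d] cat_id_dom[OF C d] cat_id_cod[OF C d] cat_id[OF C c] cat_id_dom[OF C c]
      cat_id_cod[OF C c] cat_id_left[OF C m] cat_id_right[OF C m] cat_id_left[OF C cat_id[OF C d]]
      cat_id_left[OF C cat_id[OF C c]] m
    by auto
qed

lemma nobj_at_edge_0 [simp]: "is_cat C \<Longrightarrow> m \<in> cArr C \<Longrightarrow> nobj_at C (edge C m) 0 = cdom C m"
  by (simp add: nobj_at_def edge_def cat_id_dom cat_dom)

lemma last_obj_edge [simp]: "is_cat C \<Longrightarrow> m \<in> cArr C \<Longrightarrow> last_obj C (edge C m) = ccod C m"
  by (simp add: last_obj_def edge_def nobj_at_def cat_id_dom cat_cod)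

lemma nerve_arr_from_vertex:
  assumes C: "is_cat C" and c: "c \<in> cObj C" and B: "nerve_obj C B" and k: "k \<le> fst B"
    and t: "t \<in> cArr C" "cdom C t = c" "ccod C t = nobj_at C B k"
  shows "nerve_arr C (arr_from_vertex C c B k t)"
proof -
  have "ccomp C t (cid C c) = ccomp C (snd B k k) t"
    using cat_id_left[OF C t(1)] cat_id_right[OF C t(1)] nerve_obj_id[OF B k] t by simp
  then show ?thesis
    using nerve_obj_vertex[OF C c] B k t nobj_at_vertex[OF C c]
    unfolding nerve_arr_def arr_from_vertex_def prod.case by (simp add: vertex_def)
qed

lemma last_arr_from_vertex:
  "last_arr C (arr_from_vertex C c B k t) = ccomp C (snd B k (fst B)) t"
  by (simp add: last_arr_def arr_from_vertex_def vertex_def)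

lemma arr_from_last_vertex:
  assumes C: "is_cat C" and x: "nerve_obj C x"
  defines "a \<equiv> arr_from_vertex C (last_obj C x) x (fst x) (cid C (last_obj C x))"
  shows "nerve_arr C a" and "last_arr C a = cid C (last_obj C x)"
proof -
  let ?c = "last_obj C x"
  have c: "?c \<in> cObj C" using nobj_at_in_cObj[OF C x] by (simp add: last_obj_def)
  have top: "snd x (fst x) (fst x) = cid C ?c"
    using nerve_obj_id[OF x] by (simp add: last_obj_def)
  show "nerve_arr C a"
    using nerve_arr_from_vertex[OF C c x order_refl cat_id[OF C c]] cat_id_dom[OF C c]
      cat_id_cod[OF C c]
    by (simp add: a_def last_obj_def)
  show "last_arr C a = cid C ?c"
    using cat_id_left[OF C cat_id[OF C c]] cat_id_cod[OF C c] top
    by (simp add: a_def last_arr_from_vertex)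
qed

lemma arr_between_vertices:
  assumes C: "is_cat C" and p: "p \<in> cArr C"
  defines "a \<equiv> arr_from_vertex C (cdom C p) (vertex C (ccod C p)) 0 p"
  shows "nerve_arr C a" and "last_arr C a = p"
proof -
  have d: "cdom C p \<in> cObj C" and c: "ccod C p \<in> cObj C"
    using cat_dom[OF C p] cat_cod[OF C p] .
  show "nerve_arr C a"
    using nerve_arr_from_vertex[OF C d nerve_obj_vertex[OF C c] _ p] C c by (simp add: a_def)
  show "last_arr C a = p"
    using cat_id_left[OF C p] by (simp add: a_def last_arr_from_vertex vertex_def)
qed

lemma arr_into_edge:
  assumes C: "is_cat C" and m: "m \<in> cArr C"
  defines "a \<equiv> arr_from_vertex C (cdom C m) (edge C m) 0 (cid C (cdom C m))"
  shows "nerve_arr C a" and "last_arr C a = m"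
proof -
  have d: "cdom C m \<in> cObj C" using cat_dom[OF C m] .
  show "nerve_arr C a"
    using nerve_arr_from_vertex[OF C d nerve_obj_edge[OF C m], of 0 "cid C (cdom C m)"]
      cat_id[OF C d] C d m
    by (simp add: a_def cat_id_dom cat_id_cod)
  show "last_arr C a = m"
    using cat_id_right[OF C m] by (simp add: a_def last_arr_from_vertex edge_def)
qed

lemma subcat_subcat:
  "subcat (subcat C P Q) P' Q' = subcat C (\<lambda>x. P x \<and> P' x) (\<lambda>f. Q f \<and> Q' f)"
  by (simp add: subcat_def conj_commute conj_left_commute)

lemma subcat_True: "subcat C (\<lambda>_. True) (\<lambda>_. True) = C"
  by (simp add: subcat_def)

lemma intN_subcat_simps:
  "cObj (subcat (intN C) P Q) = {A. nerve_obj C A \<and> P A}"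
  "cArr (subcat (intN C) P Q) = {f. nerve_arr C f \<and> P (fst f) \<and> P (fst (snd f)) \<and> Q f}"
  "cdom (subcat (intN C) P Q) = fst"
  "ccod (subcat (intN C) P Q) = (\<lambda>f. fst (snd f))"
  by (simp_all add: subcat_def intN_def)

lemma last_fun_simps [simp]: "fst (last_fun C) = last_obj C" "snd (last_fun C) = last_arr C"
  by (simp_all add: last_fun_def)

lemma reedy_lifts_intN_subcat:
  assumes C: "is_cat C" and Cm: "wide_subcat C Cm" and Cp: "wide_subcat C Cp"
    and P_vertex: "\<And>c. c \<in> cObj C \<Longrightarrow> P (vertex C c)"
    and P_edge: "\<And>m. m \<in> Cm \<Longrightarrow> m \<noteq> cid C (cdom C m) \<Longrightarrow> P (edge C m)"
    and Q: "\<And>c B k t. t \<in> Cp \<Longrightarrow> Q (arr_from_vertex C c B k t)"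
  shows "reedy_lifts C Cm Cp (subcat (intN C) P Q) (last_fun C) (vertex C)"
proof
  have Cm_arr: "m \<in> Cm \<Longrightarrow> m \<in> cArr C" and Cp_arr: "p \<in> Cp \<Longrightarrow> p \<in> cArr C"
    and Cp_id: "c \<in> cObj C \<Longrightarrow> cid C c \<in> Cp" for m p c
    using Cm Cp unfolding wide_subcat_def by auto
  note simps = intN_subcat_simps arr_from_vertex_def
  show "vertex C c \<in> cObj (subcat (intN C) P Q)" "fst (last_fun C) (vertex C c) = c"
    if "c \<in> cObj C" for c
    using nerve_obj_vertex[OF C that] P_vertex[OF that] that C
    by (simp_all add: intN_subcat_simps last_obj_def)
  show "fst (last_fun C) x \<in> cObj C" if "x \<in> cObj (subcat (intN C) P Q)" for x
    using that nobj_at_in_cObj[OF C] by (simp add: intN_subcat_simps last_obj_def)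
  show "\<exists>a\<in>cArr (subcat (intN C) P Q). cdom (subcat (intN C) P Q) a = vertex C (fst (last_fun C) x)
      \<and> ccod (subcat (intN C) P Q) a = x \<and> snd (last_fun C) a = cid C (fst (last_fun C) x)"
    if "x \<in> cObj (subcat (intN C) P Q)" for x
  proof -
    have x: "nerve_obj C x" "P x" using that by (simp_all add: intN_subcat_simps)
    let ?c = "last_obj C x"
    have c: "?c \<in> cObj C" using nobj_at_in_cObj[OF C x(1)] by (simp add: last_obj_def)
    show ?thesis
      using arr_from_last_vertex[OF C x(1)] x(2) P_vertex[OF c] Q[OF Cp_id[OF c], of ?c x "fst x"]
      by (intro bexI[of _ "arr_from_vertex C ?c x (fst x) (cid C ?c)"]) (simp_all add: simps)
  qed
  show "\<exists>a\<in>cArr (subcat (intN C) P Q). cdom (subcat (intN C) P Q) a = vertex C (cdom C p)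
      \<and> ccod (subcat (intN C) P Q) a = vertex C (ccod C p) \<and> snd (last_fun C) a = p"
    if "p \<in> Cp" for p
    using arr_between_vertices[OF C Cp_arr[OF that]] Q[OF that, of "cdom C p" _ 0]
      P_vertex[OF cat_dom[OF C Cp_arr[OF that]]] P_vertex[OF cat_cod[OF C Cp_arr[OF that]]]
    by (intro bexI[of _ "arr_from_vertex C (cdom C p) (vertex C (ccod C p)) 0 p"])
      (simp_all add: simps)
  show "\<exists>a\<in>cArr (subcat (intN C) P Q). cdom (subcat (intN C) P Q) a = vertex C (cdom C m)
      \<and> ccod (subcat (intN C) P Q) a \<in> cObj (subcat (intN C) P Q)
      \<and> fst (last_fun C) (ccod (subcat (intN C) P Q) a) = ccod C m \<and> snd (last_fun C) a = m"
    if "m \<in> Cm" "m \<noteq> cid C (cdom C m)" for m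
  proof -
    have m: "m \<in> cArr C" and d: "cdom C m \<in> cObj C"
      using Cm_arr[OF that(1)] cat_dom[OF C Cm_arr[OF that(1)]] by auto
    show ?thesis
      using arr_into_edge[OF C m] nerve_obj_edge[OF C m] P_vertex[OF d] P_edge[OF that]
        Q[OF Cp_id[OF d], of "cdom C m" "edge C m" 0] C m
      by (intro bexI[of _ "arr_from_vertex C (cdom C m) (edge C m) 0 (cid C (cdom C m))"])
        (simp_all add: simps)
  qed
qed

lemma nerve_arrD:
  assumes "nerve_arr C (A, B, \<alpha>, \<theta>)" and "i \<le> fst A"
  shows nerve_arr_cod_obj: "nerve_obj C B"
    and nerve_arr_vertex_le: "\<alpha> i \<le> fst B"
    and nerve_arr_comp_arr: "\<theta> i \<in> cArr C"
    and nerve_arr_comp_cod: "ccod C (\<theta> i) = nobj_at C B (\<alpha> i)"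
  using assms unfolding nerve_arr_def by auto

lemma last_arr_eq_if_nerve_le:
  assumes C: "is_cat C" and le: "nerve_le C f g" and f: "nerve_arr C f" and g: "nerve_arr C g"
  shows "last_arr C f = last_arr C g"
proof -
  obtain A B \<alpha> \<theta> \<alpha>' \<theta>' where fg: "f = (A, B, \<alpha>, \<theta>)" "g = (A, B, \<alpha>', \<theta>')"
    and le_last: "\<alpha> (fst A) \<le> \<alpha>' (fst A)"
    and \<theta>': "\<theta>' (fst A) = ccomp C (snd B (\<alpha> (fst A)) (\<alpha>' (fst A))) (\<theta> (fst A))"
    using le unfolding nerve_le_def by (auto split: prod.splits)
  let ?n = "fst A" and ?N = "fst B"
  note f' = f[unfolded fg] and g' = g[unfolded fg]
  have B: "nerve_obj C B" using nerve_arr_cod_obj[OF f' order_refl] .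
  have top: "\<alpha>' ?n \<le> ?N" using nerve_arr_vertex_le[OF g' order_refl] .
  have "last_arr C g = ccomp C (snd B (\<alpha>' ?n) ?N) (ccomp C (snd B (\<alpha> ?n) (\<alpha>' ?n)) (\<theta> ?n))"
    by (simp add: last_arr_def fg \<theta>')
  also have "\<dots> = ccomp C (ccomp C (snd B (\<alpha>' ?n) ?N) (snd B (\<alpha> ?n) (\<alpha>' ?n))) (\<theta> ?n)"
    using cat_assoc[OF C nerve_arr_comp_arr[OF f' order_refl]
        nerve_obj_arr[OF B le_last top] nerve_obj_arr[OF B top order_refl]]
      nerve_arr_comp_cod[OF f' order_refl] nerve_obj_dom[OF B le_last top]
      nerve_obj_cod[OF B le_last top] nerve_obj_dom[OF B top order_refl]
    by simp
  also have "\<dots> = last_arr C f"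
    by (simp add: last_arr_def fg nerve_obj_comp[OF B le_last top order_refl])
  finally show ?thesis ..
qed

lemma le_equiv_class_invariants:
  assumes C: "is_cat C" and \<Gamma>: "cArr \<Gamma> \<subseteq> Collect (nerve_arr C)"
    and rel: "(a, g) \<in> le_equiv C \<Gamma>" and a: "a \<in> cArr \<Gamma>"
  shows "g \<in> cArr \<Gamma> \<and> fst g = fst a \<and> fst (snd g) = fst (snd a) \<and> last_arr C g = last_arr C a"
  using rel[unfolded le_equiv_def]
proof (induction rule: rtrancl_induct)
  case (step y z)
  then have yz: "y \<in> cArr \<Gamma>" "z \<in> cArr \<Gamma>" "nerve_le C y z \<or> nerve_le C z y" by auto
  then have "nerve_arr C y" "nerve_arr C z" using \<Gamma> by auto
  then have "last_arr C z = last_arr C y"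
    using yz(3) last_arr_eq_if_nerve_le[OF C] by metis
  moreover have "fst z = fst y \<and> fst (snd z) = fst (snd y)"
    using yz(3) unfolding nerve_le_def by (auto split: prod.splits)
  ultimately show ?case using step.IH yz(2) by simp
qed (use a in simp)

lemma reedy_lifts_quot:
  assumes C: "is_cat C" and lifts: "reedy_lifts C Cm Cp (subcat (intN C) P Q) (last_fun C) s"
  defines "\<Gamma> \<equiv> subcat (intN C) P Q"
  shows "reedy_lifts C Cm Cp (quot_cat \<Gamma> (le_equiv C \<Gamma>)) (last_fun_q C) s"
proof (rule reedy_lifts.reedy_lifts_image[OF lifts[folded \<Gamma>_def]])
  show "cObj (quot_cat \<Gamma> (le_equiv C \<Gamma>)) = cObj \<Gamma>" "fst (last_fun_q C) = fst (last_fun C)"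
    by (simp_all add: quot_cat_def last_fun_q_def last_fun_def)
next
  fix a assume a: "a \<in> cArr \<Gamma>"
  let ?R = "le_equiv C \<Gamma>"
  have "(a, a) \<in> ?R" by (simp add: le_equiv_def)
  then have "(a, SOME g. g \<in> ?R `` {a}) \<in> ?R" by (metis Image_singleton_iff someI)
  moreover have "cArr \<Gamma> \<subseteq> Collect (nerve_arr C)" by (auto simp: \<Gamma>_def intN_subcat_simps)
  ultimately have "fst (SOME g. g \<in> ?R `` {a}) = fst a"
    "fst (snd (SOME g. g \<in> ?R `` {a})) = fst (snd a)"
    "last_arr C (SOME g. g \<in> ?R `` {a}) = last_arr C a"
    using le_equiv_class_invariants[OF C _ _ a] by blast+
  moreover have "?R `` {a} \<in> cArr (quot_cat \<Gamma> ?R)"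
    using a unfolding quot_cat_def cat.select_convs by blast
  ultimately show "?R `` {a} \<in> cArr (quot_cat \<Gamma> ?R) \<and>
      cdom (quot_cat \<Gamma> ?R) (?R `` {a}) = cdom \<Gamma> a \<and>
      ccod (quot_cat \<Gamma> ?R) (?R `` {a}) = ccod \<Gamma> a \<and>
      snd (last_fun_q C) (?R `` {a}) = snd (last_fun C) a"
    by (simp add: quot_cat_def last_fun_q_def \<Gamma>_def intN_subcat_simps)
qed

lemma reedyD:
  assumes "reedy C Cm Cp"
  shows "is_cat C" and "wide_subcat C Cm" and "wide_subcat C Cp"
  using assms unfolding reedy_def by simp_all

lemma reedy_factorization:
  assumes "reedy C Cm Cp"
  shows "\<forall>f\<in>cArr C. \<exists>m\<in>Cm. \<exists>p\<in>Cp. ccod C m = cdom C p \<and> ccomp C p m = f"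
proof
  fix f assume "f \<in> cArr C"
  then obtain mp where "fst mp \<in> Cm" "snd mp \<in> Cp" "ccod C (fst mp) = cdom C (snd mp)"
    "ccomp C (snd mp) (fst mp) = f"
    using assms unfolding reedy_def by blast
  then show "\<exists>m\<in>Cm. \<exists>p\<in>Cp. ccod C m = cdom C p \<and> ccomp C p m = f" by blast
qed

lemma reedy_lifts_intN:
  assumes "reedy C Cm Cp"
  shows "reedy_lifts C Cm Cp (intN C) (last_fun C) (vertex C)"
  using reedy_lifts_intN_subcat[OF reedyD[OF assms], of "\<lambda>_. True" "\<lambda>_. True"]
  by (simp add: subcat_True)

lemma edge_cases:
  "i \<le> j \<Longrightarrow> j \<le> fst (edge C m) \<Longrightarrow> (i = 0 \<and> j = 0) \<or> (i = 0 \<and> j = 1) \<or> (i = 1 \<and> j = 1)"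
  by auto

lemma edge_in_wide_subcat:
  assumes C: "is_cat C" and S: "wide_subcat C S" and m: "m \<in> S"
    and ij: "i \<le> j" "j \<le> fst (edge C m)"
  shows "snd (edge C m) i j \<in> S"
proof -
  have "cdom C m \<in> cObj C" "ccod C m \<in> cObj C"
    using m S cat_dom[OF C] cat_cod[OF C] unfolding wide_subcat_def by auto
  then show ?thesis
    using edge_cases[OF ij] m S unfolding wide_subcat_def edge_def by auto
qed

lemma edge_reflects_ids:
  assumes C: "is_cat C" and m: "m \<in> cArr C" and nonid: "m \<noteq> cid C (cdom C m)"
    and ij: "i \<le> j" "j \<le> fst (edge C m)"
    and id: "snd (edge C m) i j = cid C (nobj_at C (edge C m) i)"
  shows "i = j"
  using edge_cases[OF ij] nonid id C m by (auto simp: edge_def nobj_at_def cat_id_dom cat_dom)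

lemma reedy_lifts_intN_mp:
  assumes R: "reedy C Cm Cp"
  shows "reedy_lifts C Cm Cp (intN_mp C Cm Cp) (last_fun C) (vertex C)"
  unfolding intN_mp_def
proof (rule reedy_lifts_intN_subcat)
  show C: "is_cat C" and Cm: "wide_subcat C Cm" and Cp: "wide_subcat C Cp"
    using reedyD[OF R] .
  show "\<forall>i j. i \<le> j \<and> j \<le> fst (vertex C c) \<longrightarrow> snd (vertex C c) i j \<in> Cm" if "c \<in> cObj C" for c
    using that Cm by (simp add: wide_subcat_def vertex_def)
  show "\<forall>i j. i \<le> j \<and> j \<le> fst (edge C m) \<longrightarrow> snd (edge C m) i j \<in> Cm" if "m \<in> Cm" for m
    using edge_in_wide_subcat[OF C Cm that] by blast
qed (simp add: arr_from_vertex_def)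

lemma reedy_lifts_intN_mmpp:
  assumes R: "reedy C Cm Cp"
  shows "reedy_lifts C Cm Cp (intN_mmpp C Cm Cp) (last_fun C) (vertex C)"
  unfolding intN_mmpp_def intN_mp_def subcat_subcat
proof (rule reedy_lifts_intN_subcat)
  show C: "is_cat C" and Cm: "wide_subcat C Cm" and Cp: "wide_subcat C Cp"
    using reedyD[OF R] .
  show "(\<forall>i j. i \<le> j \<and> j \<le> fst (vertex C c) \<longrightarrow> snd (vertex C c) i j \<in> Cm) \<and>
      (\<forall>i j. i \<le> j \<and> j \<le> fst (vertex C c) \<and>
        snd (vertex C c) i j = cid C (nobj_at C (vertex C c) i) \<longrightarrow> i = j)"
    if "c \<in> cObj C" for c
    using that Cm by (simp add: wide_subcat_def vertex_def)
  show "(\<forall>i j. i \<le> j \<and> j \<le> fst (edge C m) \<longrightarrow> snd (edge C m) i j \<in> Cm) \<and>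
      (\<forall>i j. i \<le> j \<and> j \<le> fst (edge C m) \<and>
        snd (edge C m) i j = cid C (nobj_at C (edge C m) i) \<longrightarrow> i = j)"
    if "m \<in> Cm" "m \<noteq> cid C (cdom C m)" for m
    using edge_in_wide_subcat[OF C Cm that(1)] edge_reflects_ids[OF C _ that(2)] that(1) Cm
    unfolding wide_subcat_def by blast
qed (simp add: arr_from_vertex_def)

lemma reedy_lifts_Down_star:
  assumes "reedy C Cm Cp"
  shows "reedy_lifts C Cm Cp (Down_star C Cm Cp) (last_fun_q C) (vertex C)"
  using reedy_lifts_quot[OF reedyD(1)[OF assms] reedy_lifts_intN_mp[OF assms, unfolded intN_mp_def]]
  unfolding Down_star_def intN_mp_def .

lemma reedy_lifts_Down:
  assumes "reedy C Cm Cp"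
  shows "reedy_lifts C Cm Cp (Down C Cm Cp) (last_fun_q C) (vertex C)"
  using reedy_lifts_quot[OF reedyD(1)[OF assms]
      reedy_lifts_intN_mmpp[OF assms, unfolded intN_mmpp_def intN_mp_def subcat_subcat]]
  unfolding Down_def intN_mmpp_def intN_mp_def subcat_subcat .

theorem lemma7p8:
  fixes C :: "('o, 'm) cat" and Cm Cp :: "'m set"
    and D :: "('p, 'n) cat"
    and F G :: "('o \<Rightarrow> 'p) \<times> ('m \<Rightarrow> 'n)"
  assumes "reedy C Cm Cp"
    and "is_cat D"
    and "is_functor C D F"
    and "is_functor C D G"
  shows "whisker_unique C D (intN C) (last_fun C) F G
       \<and> whisker_unique C D (intN_mp C Cm Cp) (last_fun C) F G
       \<and> whisker_unique C D (intN_mmpp C Cm Cp) (last_fun C) F G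
       \<and> whisker_unique C D (Down_star C Cm Cp) (last_fun_q C) F G
       \<and> whisker_unique C D (Down C Cm Cp) (last_fun_q C) F G"
proof -
  have C: "is_cat C" and Cm: "Cm \<subseteq> cArr C" and Cp: "Cp \<subseteq> cArr C"
    using reedyD[OF assms(1)] unfolding wide_subcat_def by auto
  note whisker = reedy_lifts.whisker_unique[OF _ C assms(2-4) Cm Cp reedy_factorization[OF assms(1)]]
  show ?thesis
    using whisker[OF reedy_lifts_intN[OF assms(1)]] whisker[OF reedy_lifts_intN_mp[OF assms(1)]]
      whisker[OF reedy_lifts_intN_mmpp[OF assms(1)]] whisker[OF reedy_lifts_Down_star[OF assms(1)]]
      whisker[OF reedy_lifts_Down[OF assms(1)]]
    by blast
qed

end
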